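(* Write $\dfrac{(q;q)_\infty^2}{(q^2;q^2)_\infty(q^3;q^3)_\infty^2}=\sum_{n\ge0}a_nq^n$. Then for all $n\ge0$: $a_n>0$ if $n\equiv0\pmod3$, $a_n<0$ if $n\equiv1\pmod3$, and $a_n=0$ if $n\equiv2\pmod3$.
   Context: For $|q|<1$, $(a;q)_\infty=\prod_{k\ge0}(1-aq^k)$. *)

theory Defs
  imports "HOL-Analysis.Analysis"
begin

definition qpoch_inf :: "real \<Rightarrow> real \<Rightarrow> real" where
  "qpoch_inf a q = (\<Prod>k. 1 - a * q ^ k)"

definition F :: "real \<Rightarrow> real" where
  "F q = qpoch_inf q q ^ 2 / (qpoch_inf (q^2) (q^2) * qpoch_inf (q^3) (q^3) ^ 2)"

end

(* Gauss's identity, the case z = -1 of the Jacobi triple product, writes (q;q)^2 / (q^2;q^2) as the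
   theta series theta(-1,q) = sum over n in Z of (-1)^n q^(n^2).  Sorting n by its residue mod 3 gives the
   3-dissection theta(-1,q) = theta(-1,q^9) - 2 q theta(-q^6,q^9), and the triple product turns both
   pieces back into products: with x = q^3,
     F(q) = G0(x) - 2 q G1(x),  G0 = (x^6;x^6) (x^3;x^6)^2 / (x;x)^2,  G1 = (x^6;x^6) (x;x^6) (x^5;x^6) / (x;x)^2.
   Both G0 and G1 are products of factors (1 - x^k)^(-e k) with e k in {0,1,2} and e 1 > 0, so all their
   coefficients are at least 1.  Hence a(3n) >= 1, a(3n+1) <= -2 and a(3n+2) = 0.
   The triple product is obtained as the limit of its finite form, a consequence of the q-binomial
   theorem. *)

theory Submission
  imports Defs
begin

unbundle no vec_syntax
unbundle fps_syntax

section \<open>Coefficients of products of inverse factors\<close>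

definition geo_fps :: "nat \<Rightarrow> 'a::comm_semiring_1 fps" where
  "geo_fps k = Abs_fps (\<lambda>n. if k dvd n then 1 else 0)"

lemma geo_fps_nth [simp]: "geo_fps k $ n = (if k dvd n then 1 else 0)"
  by (simp add: geo_fps_def)

definition nonneg_fps :: "'a::linordered_semidom fps \<Rightarrow> bool" where
  "nonneg_fps A \<longleftrightarrow> (\<forall>n. 0 \<le> A $ n)"

definition one_plus_X_pow :: "nat \<Rightarrow> 'a::linordered_semidom fps \<Rightarrow> bool" where
  "one_plus_X_pow k H \<longleftrightarrow> nonneg_fps H \<and> H $ 0 = 1 \<and> (\<forall>j. 0 < j \<and> j < k \<longrightarrow> H $ j = 0)"

lemma nonneg_fps_mult: "nonneg_fps A \<Longrightarrow> nonneg_fps B \<Longrightarrow> nonneg_fps (A * B)"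
  unfolding nonneg_fps_def fps_mult_nth by (auto intro!: sum_nonneg)

lemma fps_mult_nth_one_plus_X_pow:
  assumes "one_plus_X_pow k H" "n < k"
  shows "(A * H) $ n = A $ n"
proof -
  have "(A * H) $ n = (\<Sum>i\<in>{n}. A $ i * H $ (n - i))"
    unfolding fps_mult_nth
    by (rule sum.mono_neutral_right) (use assms in \<open>auto simp: one_plus_X_pow_def\<close>)
  then show ?thesis
    using assms by (simp add: one_plus_X_pow_def)
qed

lemma fps_mult_nth_one_plus_X_pow_ge:
  assumes "nonneg_fps A" "one_plus_X_pow k H"
  shows "A $ n \<le> (A * H) $ n"
proof -
  have "A $ n = A $ n * H $ (n - n)"
    using assms by (simp add: one_plus_X_pow_def)
  also have "\<dots> \<le> (\<Sum>i=0..n. A $ i * H $ (n - i))"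
    by (rule member_le_sum[where f = "\<lambda>i. A $ i * H $ (n - i)"])
       (use assms in \<open>auto simp: one_plus_X_pow_def nonneg_fps_def\<close>)
  finally show ?thesis
    by (simp add: fps_mult_nth)
qed

lemma one_plus_X_pow_mult:
  assumes "one_plus_X_pow k A" "one_plus_X_pow k B"
  shows "one_plus_X_pow k (A * B)"
proof -
  have "(A * B) $ j = 0" if "0 < j" "j < k" for j
    using fps_mult_nth_one_plus_X_pow[OF assms(2) \<open>j < k\<close>] assms(1) that
    by (simp add: one_plus_X_pow_def)
  then show ?thesis
    using assms nonneg_fps_mult by (auto simp: one_plus_X_pow_def fps_mult_nth)
qed

lemma one_plus_X_pow_one: "one_plus_X_pow k 1"
  by (simp add: one_plus_X_pow_def nonneg_fps_def)

lemma one_plus_X_pow_power: "one_plus_X_pow k A \<Longrightarrow> one_plus_X_pow k (A ^ m)"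
  by (induction m) (simp_all add: one_plus_X_pow_one one_plus_X_pow_mult)

lemma one_plus_X_pow_geo_fps: "0 < k \<Longrightarrow> one_plus_X_pow k (geo_fps k)"
  by (auto simp: one_plus_X_pow_def nonneg_fps_def geo_fps_nth dest: dvd_imp_le)

definition inv_prod_fps :: "(nat \<Rightarrow> nat) \<Rightarrow> nat \<Rightarrow> 'a::linordered_semidom fps" where
  "inv_prod_fps e K = (\<Prod>k\<in>{1..K}. geo_fps k ^ e k)"

lemma inv_prod_fps_Suc: "inv_prod_fps e (Suc K) = inv_prod_fps e K * geo_fps (Suc K) ^ e (Suc K)"
  by (simp add: inv_prod_fps_def prod.cl_ivl_Suc)

lemma one_plus_X_pow_geo_fps_power: "0 < k \<Longrightarrow> one_plus_X_pow k (geo_fps k ^ m)"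
  by (intro one_plus_X_pow_power one_plus_X_pow_geo_fps)

lemma nonneg_inv_prod_fps: "nonneg_fps (inv_prod_fps e K :: 'a::linordered_semidom fps)"
proof (induction K)
  case (Suc K)
  have "one_plus_X_pow (Suc K) (geo_fps (Suc K) ^ e (Suc K) :: 'a fps)"
    by (rule one_plus_X_pow_geo_fps_power) simp
  with Suc show ?case
    unfolding inv_prod_fps_Suc one_plus_X_pow_def by (blast intro: nonneg_fps_mult)
qed (simp add: inv_prod_fps_def nonneg_fps_def)

lemma inv_prod_fps_nth_nonneg: "0 \<le> (inv_prod_fps e K :: 'a::linordered_semidom fps) $ n"
  using nonneg_inv_prod_fps[of e K, where 'a='a] by (simp add: nonneg_fps_def)

lemma inv_prod_fps_Suc_nth_eq: "n \<le> K \<Longrightarrow> inv_prod_fps e (Suc K) $ n = inv_prod_fps e K $ n"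
  unfolding inv_prod_fps_Suc
  by (rule fps_mult_nth_one_plus_X_pow[OF one_plus_X_pow_geo_fps_power]) simp_all

lemma inv_prod_fps_Suc_nth_ge: "inv_prod_fps e K $ n \<le> inv_prod_fps e (Suc K) $ n"
  unfolding inv_prod_fps_Suc
  by (rule fps_mult_nth_one_plus_X_pow_ge[OF nonneg_inv_prod_fps one_plus_X_pow_geo_fps_power]) simp

definition inv_prod_coeff :: "(nat \<Rightarrow> nat) \<Rightarrow> nat \<Rightarrow> 'a::linordered_semidom" where
  "inv_prod_coeff e n = inv_prod_fps e n $ n"

lemma inv_prod_fps_nth_eq_coeff: "n \<le> K \<Longrightarrow> inv_prod_fps e K $ n = inv_prod_coeff e n"
proof (induction K rule: dec_induct)
  case (step m)
  then show ?case
    by (simp add: inv_prod_fps_Suc_nth_eq)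
qed (simp add: inv_prod_coeff_def)

lemma inv_prod_fps_nth_mono: "incseq (\<lambda>K. inv_prod_fps e K $ n)"
  by (intro incseq_SucI inv_prod_fps_Suc_nth_ge)

lemma inv_prod_fps_nth_le_coeff: "inv_prod_fps e K $ n \<le> inv_prod_coeff e n"
proof (cases "n \<le> K")
  case True
  then show ?thesis
    by (simp add: inv_prod_fps_nth_eq_coeff)
next
  case False
  then show ?thesis
    unfolding inv_prod_coeff_def by (intro incseqD[OF inv_prod_fps_nth_mono]) simp
qed

lemma inv_prod_coeff_nonneg: "0 \<le> (inv_prod_coeff e n :: 'a::linordered_semidom)"
  by (simp add: inv_prod_coeff_def inv_prod_fps_nth_nonneg)

lemma inv_prod_coeff_0: "inv_prod_coeff e 0 = 1"
  by (simp add: inv_prod_coeff_def inv_prod_fps_def)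

lemma geo_fps_1_power_nth_ge:
  assumes "0 < m" shows "1 \<le> (geo_fps 1 ^ m :: 'a::linordered_semidom fps) $ n"
proof -
  obtain m' where m: "m = Suc m'"
    using assms gr0_implies_Suc by blast
  have "nonneg_fps (geo_fps 1 :: 'a fps)"
    by (simp add: nonneg_fps_def)
  have "(1::'a) = geo_fps 1 $ n"
    by simp
  also have "\<dots> \<le> (geo_fps 1 * geo_fps 1 ^ m') $ n"
    by (rule fps_mult_nth_one_plus_X_pow_ge[OF \<open>nonneg_fps (geo_fps 1)\<close>
          one_plus_X_pow_geo_fps_power[of 1]]) simp
  also have "\<dots> = (geo_fps 1 ^ m) $ n"
    by (simp only: m power_Suc)
  finally show ?thesis .
qed

lemma inv_prod_coeff_ge_1:
  assumes "0 < e 1" shows "1 \<le> (inv_prod_coeff e n :: 'a::linordered_semidom)"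
proof (cases n)
  case (Suc n')
  have "inv_prod_fps e 1 = (geo_fps 1 ^ e 1 :: 'a fps)"
    by (simp add: inv_prod_fps_def)
  then have "(1::'a) \<le> inv_prod_fps e 1 $ n"
    using geo_fps_1_power_nth_ge[OF assms, where 'a='a] by simp
  also have "\<dots> \<le> inv_prod_coeff e n"
    unfolding inv_prod_coeff_def by (rule incseqD[OF inv_prod_fps_nth_mono]) (simp add: Suc)
  finally show ?thesis .
qed (simp add: inv_prod_coeff_0)

section \<open>Finite and infinite q-Pochhammer symbols\<close>

definition qpoch :: "real \<Rightarrow> real \<Rightarrow> nat \<Rightarrow> real" where
  "qpoch a q n = (\<Prod>k<n. 1 - a * q ^ k)"

lemma qpoch_0 [simp]: "qpoch a q 0 = 1"
  by (simp add: qpoch_def)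

lemma qpoch_Suc: "qpoch a q (Suc n) = qpoch a q n * (1 - a * q ^ n)"
  by (simp add: qpoch_def)

lemma qpoch_self: "qpoch q q n = (\<Prod>k\<in>{1..n}. 1 - q ^ k)"
  by (induction n) (simp_all add: qpoch_Suc prod.cl_ivl_Suc mult_ac)

lemma convergent_prod_qpoch:
  fixes a q :: real
  assumes "\<bar>q\<bar> < 1" shows "convergent_prod (\<lambda>k. 1 - a * q ^ k)"
proof -
  have "summable (\<lambda>k. \<bar>q\<bar> ^ k)"
    using assms by (simp add: summable_geometric)
  then have "summable (\<lambda>k. \<bar>a\<bar> * \<bar>q\<bar> ^ k)"
    by (rule summable_mult)
  then have "summable (\<lambda>k. norm ((1 - a * q ^ k) - 1))"
    by (simp add: abs_mult power_abs)
  then show ?thesis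
    by (intro abs_convergent_prod_imp_convergent_prod summable_imp_abs_convergent_prod)
qed

lemma qpoch_tendsto:
  assumes "\<bar>q\<bar> < 1" shows "qpoch a q \<longlonglongrightarrow> qpoch_inf a q"
proof -
  have "(\<lambda>n. \<Prod>k\<le>n. 1 - a * q ^ k) \<longlonglongrightarrow> qpoch_inf a q"
    unfolding qpoch_inf_def by (rule convergent_prod_LIMSEQ[OF convergent_prod_qpoch[OF assms]])
  then have "(\<lambda>n. qpoch a q (Suc n)) \<longlonglongrightarrow> qpoch_inf a q"
    by (simp add: qpoch_def lessThan_Suc_atMost)
  then show ?thesis
    by (rule LIMSEQ_imp_Suc)
qed

lemma qpoch_factor_pos:
  fixes a q :: real
  assumes "\<bar>q\<bar> \<le> 1" "\<bar>a\<bar> < 1" shows "0 < 1 - a * q ^ k"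
proof -
  have "\<bar>q\<bar> ^ k \<le> 1"
    using assms by (simp add: power_le_one)
  then have "\<bar>a * q ^ k\<bar> \<le> \<bar>a\<bar>"
    by (simp add: abs_mult power_abs mult_left_le)
  then show ?thesis
    using assms by linarith
qed

lemma qpoch_pos: "\<bar>q\<bar> \<le> 1 \<Longrightarrow> \<bar>a\<bar> < 1 \<Longrightarrow> 0 < qpoch a q n"
  unfolding qpoch_def by (intro prod_pos qpoch_factor_pos) auto

lemma qpoch_inf_pos: "\<bar>q\<bar> < 1 \<Longrightarrow> \<bar>a\<bar> < 1 \<Longrightarrow> 0 < qpoch_inf a q"
  unfolding qpoch_inf_def
  by (intro less_0_prodinf convergent_prod_qpoch qpoch_factor_pos) auto

lemma qpoch_decseq:
  assumes "0 \<le> a" "a < 1" "0 \<le> q" "q \<le> 1" shows "decseq (qpoch a q)"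
proof (rule decseq_SucI)
  fix n
  have "0 \<le> a * q ^ n"
    using assms by simp
  then show "qpoch a q (Suc n) \<le> qpoch a q n"
    using qpoch_pos[of q a n] assms by (simp add: qpoch_Suc mult_le_cancel_left1)
qed

lemma qpoch_inf_le_qpoch:
  assumes "0 \<le> a" "a < 1" "0 \<le> q" "q < 1" shows "qpoch_inf a q \<le> qpoch a q n"
  using decseq_ge[OF qpoch_decseq qpoch_tendsto] assms by simp

lemma abs_power_less_one: "\<bar>q\<bar> < 1 \<Longrightarrow> 0 < n \<Longrightarrow> \<bar>(q::real) ^ n\<bar> < 1"
  by (simp add: power_abs power_less_one_iff)

lemma qpoch_inf_0_0: "qpoch_inf 0 0 = 1"
proof -
  have "qpoch 0 0 = (\<lambda>_. 1)"
    by (auto simp: qpoch_def)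
  moreover have "qpoch 0 0 \<longlonglongrightarrow> qpoch_inf 0 0"
    by (rule qpoch_tendsto) simp
  ultimately show ?thesis
    using LIMSEQ_unique tendsto_const by metis
qed

section \<open>Analytic meaning of the coefficients\<close>

lemma sums_geo_fps:
  fixes x :: "'a::{real_normed_field, banach}"
  assumes "0 < k" "norm x < 1"
  shows "(\<lambda>n. geo_fps k $ n * x ^ n) sums (1 / (1 - x ^ k))"
proof -
  have "norm (x ^ k) < 1"
    using assms by (simp add: norm_power power_less_one_iff)
  then have "(\<lambda>m. (x ^ k) ^ m) sums (1 / (1 - x ^ k))"
    using geometric_sums by (simp add: divide_inverse)
  then have "(\<lambda>m. geo_fps k $ (k * m) * x ^ (k * m)) sums (1 / (1 - x ^ k))"
    by (simp add: power_mult)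
  then show ?thesis
    using assms by (subst (asm) sums_mono_reindex) (auto simp: strict_mono_def)
qed

lemma fps_conv_radius_geo_fps:
  assumes "0 < k" shows "1 \<le> fps_conv_radius (geo_fps k :: real fps)"
  unfolding fps_conv_radius_def
proof (rule conv_radius_geI_ex)
  fix r :: real assume "0 < r" "ereal r < 1"
  then have "norm r = r \<and> summable (\<lambda>n. geo_fps k $ n * r ^ n)"
    using sums_geo_fps[OF assms, of r] by (auto simp: sums_iff)
  then show "\<exists>z::real. norm z = r \<and> summable (\<lambda>n. geo_fps k $ n * z ^ n)" ..
qed

lemma eval_fps_geo_fps:
  fixes x :: real
  shows "0 < k \<Longrightarrow> \<bar>x\<bar> < 1 \<Longrightarrow> eval_fps (geo_fps k) x = 1 / (1 - x ^ k)"
  unfolding eval_fps_def using sums_geo_fps[of k x] by (simp add: sums_iff)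

definition inv_partial_prod :: "(nat \<Rightarrow> nat) \<Rightarrow> nat \<Rightarrow> real \<Rightarrow> real" where
  "inv_partial_prod e K x = (\<Prod>k\<in>{1..K}. (1 / (1 - x ^ k)) ^ e k)"

lemma fps_conv_radius_inv_prod_fps: "1 \<le> fps_conv_radius (inv_prod_fps e K :: real fps)"
proof (induction K)
  case (Suc K)
  have "1 \<le> fps_conv_radius (geo_fps (Suc K) ^ e (Suc K) :: real fps)"
    by (rule order_trans[OF fps_conv_radius_geo_fps fps_conv_radius_power]) simp
  with Suc show ?case
    unfolding inv_prod_fps_Suc by (intro order_trans[OF _ fps_conv_radius_mult]) simp
qed (simp add: inv_prod_fps_def)

lemma eval_fps_inv_prod_fps:
  assumes "\<bar>x\<bar> < 1" shows "eval_fps (inv_prod_fps e K) x = inv_partial_prod e K x"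
proof (induction K)
  case (Suc K)
  have x: "ereal (norm x) < 1"
    using assms by simp
  have r1: "ereal (norm x) < fps_conv_radius (inv_prod_fps e K :: real fps)"
    using less_le_trans[OF x fps_conv_radius_inv_prod_fps] .
  have r2: "ereal (norm x) < fps_conv_radius (geo_fps (Suc K) :: real fps)"
    using less_le_trans[OF x fps_conv_radius_geo_fps] by simp
  have "eval_fps (inv_prod_fps e (Suc K)) x
      = eval_fps (inv_prod_fps e K) x * eval_fps (geo_fps (Suc K)) x ^ e (Suc K)"
    unfolding inv_prod_fps_Suc eval_fps_mult[OF r1 less_le_trans[OF r2 fps_conv_radius_power]]
    by (simp add: eval_fps_power[OF r2])
  then show ?case
    using Suc assms by (simp add: eval_fps_geo_fps inv_partial_prod_def prod.cl_ivl_Suc)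
qed (simp add: inv_prod_fps_def inv_partial_prod_def)

lemma inv_partial_prod_le:
  assumes "0 \<le> y" "y < 1" "\<forall>k. e k \<le> B"
  shows "inv_partial_prod e K y \<le> (1 / qpoch_inf y y) ^ B"
proof -
  have pos: "0 < 1 - y ^ k" if "k \<in> {1..K}" for k
    using that assms by (simp add: power_less_one_iff)
  have "inv_partial_prod e K y \<le> (\<Prod>k\<in>{1..K}. (1 / (1 - y ^ k)) ^ B)"
    unfolding inv_partial_prod_def
    using pos assms by (intro prod_mono conjI power_increasing) (auto simp: power_le_one)
  also have "\<dots> = (1 / qpoch y y K) ^ B"
    by (simp add: qpoch_self prod_power_distrib[symmetric] prod_dividef)
  also have "\<dots> \<le> (1 / qpoch_inf y y) ^ B"
    using assms qpoch_inf_pos[of y y] qpoch_inf_le_qpoch[of y y K]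
    by (intro power_mono divide_left_mono) auto
  finally show ?thesis .
qed

lemma summable_inv_prod_coeff:
  fixes x :: real
  assumes "\<forall>k. e k \<le> B" "\<bar>x\<bar> < 1"
  shows "summable (\<lambda>n. norm (inv_prod_coeff e n * x ^ n))"
proof -
  define y where "y = \<bar>x\<bar>"
  have y: "0 \<le> y" "y < 1"
    using assms by (auto simp: y_def)
  have "summable (\<lambda>n. inv_prod_coeff e n * y ^ n :: real)"
  proof (rule summableI_nonneg_bounded)
    fix n
    show "(0::real) \<le> inv_prod_coeff e n * y ^ n"
      using y by (simp add: inv_prod_coeff_nonneg)
  next
    fix N
    have conv: "ereal (norm y) < fps_conv_radius (inv_prod_fps e N :: real fps)"
      using y less_le_trans[OF _ fps_conv_radius_inv_prod_fps] by simp
    have "(\<Sum>n<N. inv_prod_coeff e n * y ^ n) = (\<Sum>n<N. inv_prod_fps e N $ n * y ^ n :: real)"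
      by (intro sum.cong refl) (simp add: inv_prod_fps_nth_eq_coeff)
    also have "\<dots> \<le> eval_fps (inv_prod_fps e N) y"
      unfolding eval_fps_def using y summable_fps[OF conv]
      by (intro sum_le_suminf) (auto simp: inv_prod_fps_nth_nonneg)
    also have "\<dots> = inv_partial_prod e N y"
      using y by (simp add: eval_fps_inv_prod_fps)
    also have "\<dots> \<le> (1 / qpoch_inf y y) ^ B"
      using y assms by (intro inv_partial_prod_le)
    finally show "(\<Sum>n<N. inv_prod_coeff e n * y ^ n) \<le> (1 / qpoch_inf y y) ^ B" .
  qed
  then show ?thesis
    by (simp add: y_def abs_mult power_abs inv_prod_coeff_nonneg)
qed

lemma inv_partial_prod_tendsto:
  assumes "\<forall>k. e k \<le> B" "\<bar>x\<bar> < 1"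
  shows "(\<lambda>K. inv_partial_prod e K x) \<longlonglongrightarrow> (\<Sum>n. inv_prod_coeff e n * x ^ n)"
proof -
  define a where "a n K = inv_prod_fps e K $ n * x ^ n" for n K
  have lim: "(\<lambda>K. a n K) \<longlonglongrightarrow> inv_prod_coeff e n * x ^ n" for n
  proof (rule tendsto_eventually)
    show "\<forall>\<^sub>F K in sequentially. a n K = inv_prod_coeff e n * x ^ n"
      using eventually_ge_at_top[of n]
      by eventually_elim (simp add: a_def inv_prod_fps_nth_eq_coeff)
  qed
  have bound: "\<forall>\<^sub>F (n, K) in at_top \<times>\<^sub>F sequentially.
      norm (a n K) \<le> norm (inv_prod_coeff e n * x ^ n)"
  proof (intro always_eventually allI, clarify)
    fix n K
    show "norm (a n K) \<le> norm (inv_prod_coeff e n * x ^ n)"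
      using inv_prod_fps_nth_le_coeff[of e K n, where 'a=real]
      by (auto simp: a_def abs_mult inv_prod_fps_nth_nonneg intro!: mult_right_mono)
  qed
  have "(\<lambda>K. \<Sum>n. a n K) \<longlonglongrightarrow> (\<Sum>n. inv_prod_coeff e n * x ^ n)"
    using tannerys_theorem[OF lim bound summable_inv_prod_coeff[OF assms]] by simp
  moreover have "(\<Sum>n. a n K) = inv_partial_prod e K x" for K
    using eval_fps_inv_prod_fps[OF assms(2)] by (simp add: a_def eval_fps_def)
  ultimately show ?thesis
    by simp
qed

section \<open>Gaussian binomial coefficients\<close>

fun qbinom :: "'a::comm_semiring_1 \<Rightarrow> nat \<Rightarrow> nat \<Rightarrow> 'a" where
  "qbinom t 0 k = (if k = 0 then 1 else 0)"
| "qbinom t (Suc n) 0 = 1"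
| "qbinom t (Suc n) (Suc k) = qbinom t n k + t ^ Suc k * qbinom t n (Suc k)"

lemma qbinom_eq_0: "n < k \<Longrightarrow> qbinom t n k = 0"
proof (induction n arbitrary: k)
  case (Suc n)
  then show ?case
    by (cases k) auto
qed simp

lemma qbinom_n_0 [simp]: "qbinom t n 0 = 1"
  by (cases n) auto

lemma qbinom_nonneg: "0 \<le> t \<Longrightarrow> 0 \<le> qbinom (t::'a::linordered_semidom) n k"
  by (induction t n k rule: qbinom.induct) auto

lemma Suc_choose_two: "Suc n choose 2 = (n choose 2) + n"
  by (simp add: numeral_2_eq_2)

theorem q_binomial_theorem:
  fixes a b t :: "'a::comm_semiring_1"
  shows "(\<Prod>k<N. a + b * t ^ k) = (\<Sum>i\<le>N. qbinom t N i * t ^ (i choose 2) * b ^ i * a ^ (N - i))"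
proof (induction N arbitrary: b)
  case (Suc N)
  define g where "g i = qbinom t N i * t ^ (Suc i choose 2) * b ^ i * a ^ (Suc N - i)" for i
  have "(\<Prod>k<Suc N. a + b * t ^ k) = (a + b) * (\<Prod>k<N. a + (b * t) * t ^ k)"
    by (subst prod.lessThan_Suc_shift) (simp add: mult_ac del: prod.lessThan_Suc)
  also have "\<dots> = a * (\<Sum>i\<le>N. qbinom t N i * t ^ (i choose 2) * (b * t) ^ i * a ^ (N - i))
      + b * (\<Sum>i\<le>N. qbinom t N i * t ^ (i choose 2) * (b * t) ^ i * a ^ (N - i))"
    by (simp add: Suc.IH distrib_right)
  also have "a * (\<Sum>i\<le>N. qbinom t N i * t ^ (i choose 2) * (b * t) ^ i * a ^ (N - i)) = (\<Sum>i\<le>Suc N. g i)"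
    unfolding sum_distrib_left using qbinom_eq_0[of N "Suc N" t]
    by (simp add: g_def Suc_choose_two Suc_diff_le power_add power_mult_distrib mult_ac)
  also have "\<dots> = a ^ Suc N + (\<Sum>i\<le>N. g (Suc i))"
    by (simp add: sum.atMost_Suc_shift g_def binomial_eq_0 del: sum.atMost_Suc)
  also have "b * (\<Sum>i\<le>N. qbinom t N i * t ^ (i choose 2) * (b * t) ^ i * a ^ (N - i))
      = (\<Sum>i\<le>N. qbinom t N i * t ^ (Suc i choose 2) * b ^ Suc i * a ^ (N - i))"
    unfolding sum_distrib_left
    by (intro sum.cong refl) (simp add: Suc_choose_two power_add power_mult_distrib mult_ac)
  also have "a ^ Suc N + (\<Sum>i\<le>N. g (Suc i)) + \<dots>
      = (\<Sum>i\<le>Suc N. qbinom t (Suc N) i * t ^ (i choose 2) * b ^ i * a ^ (Suc N - i))"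
    by (simp add: sum.atMost_Suc_shift g_def Suc_choose_two sum.distrib[symmetric] algebra_simps
        power_add binomial_eq_0 del: sum.atMost_Suc)
  finally show ?case .
qed (simp add: binomial_eq_0)

lemma qpoch_self_Suc: "qpoch q q (Suc n) = qpoch q q n * (1 - q ^ Suc n)"
  by (simp add: qpoch_Suc)

lemma qpoch_self_Suc_split:
  assumes "k \<le> n"
  shows "qpoch t t n * (1 - t ^ Suc k) + t ^ Suc k * (qpoch t t n * (1 - t ^ (n - k))) = qpoch t t (Suc n)"
proof -
  have pow: "t ^ Suc k * t ^ (n - k) = t ^ Suc n"
    unfolding power_add[symmetric] using assms by simp
  have "qpoch t t n * (1 - t ^ Suc k) + t ^ Suc k * (qpoch t t n * (1 - t ^ (n - k)))
      = qpoch t t n * (1 - t ^ Suc k * t ^ (n - k))"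
    by (simp add: algebra_simps)
  also have "\<dots> = qpoch t t (Suc n)"
    by (simp only: pow qpoch_self_Suc)
  finally show ?thesis .
qed

lemma qbinom_qpoch: "k \<le> n \<Longrightarrow> qbinom t n k * qpoch t t k * qpoch t t (n - k) = qpoch t t n"
proof (induction n arbitrary: k)
  case (Suc n)
  show ?case
  proof (cases k)
    case (Suc k')
    with Suc.prems have "k' \<le> n"
      by simp
    have "qbinom t n k' * qpoch t t (Suc k') * qpoch t t (n - k')
        = (qbinom t n k' * qpoch t t k' * qpoch t t (n - k')) * (1 - t ^ Suc k')"
      by (simp add: qpoch_self_Suc mult_ac)
    also have "\<dots> = qpoch t t n * (1 - t ^ Suc k')"
      by (simp only: Suc.IH[OF \<open>k' \<le> n\<close>])
    finally have first: "qbinom t n k' * qpoch t t (Suc k') * qpoch t t (n - k')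
        = qpoch t t n * (1 - t ^ Suc k')" .
    have second: "qbinom t n (Suc k') * qpoch t t (Suc k') * qpoch t t (n - k')
        = qpoch t t n * (1 - t ^ (n - k'))"
    proof (cases "k' = n")
      case False
      then have "Suc k' \<le> n" and nk: "n - k' = Suc (n - Suc k')"
        using \<open>k' \<le> n\<close> by auto
      have "qbinom t n (Suc k') * qpoch t t (Suc k') * qpoch t t (n - k')
          = (qbinom t n (Suc k') * qpoch t t (Suc k') * qpoch t t (n - Suc k')) * (1 - t ^ (n - k'))"
        unfolding nk by (simp add: qpoch_self_Suc mult_ac)
      also have "\<dots> = qpoch t t n * (1 - t ^ (n - k'))"
        by (simp only: Suc.IH[OF \<open>Suc k' \<le> n\<close>])
      finally show ?thesis .
    qed (simp add: qbinom_eq_0)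
    have "qbinom t (Suc n) k * qpoch t t k * qpoch t t (Suc n - k)
        = qbinom t n k' * qpoch t t (Suc k') * qpoch t t (n - k')
          + t ^ Suc k' * (qbinom t n (Suc k') * qpoch t t (Suc k') * qpoch t t (n - k'))"
      by (simp add: Suc distrib_right mult.assoc)
    also have "\<dots> = qpoch t t n * (1 - t ^ Suc k') + t ^ Suc k' * (qpoch t t n * (1 - t ^ (n - k')))"
      by (simp only: first second)
    also have "\<dots> = qpoch t t (Suc n)"
      using \<open>k' \<le> n\<close> by (rule qpoch_self_Suc_split)
    finally show ?thesis .
  qed (simp add: qpoch_self_Suc)
qed simp

lemma qpoch_self_pos: "0 \<le> t \<Longrightarrow> t < 1 \<Longrightarrow> 0 < qpoch t t n"
  by (intro qpoch_pos) auto

lemma qbinom_eq_qpoch_div: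
  assumes "0 \<le> t" "t < 1" "k \<le> n"
  shows "qbinom t n k = qpoch t t n / (qpoch t t k * qpoch t t (n - k))"
  using qbinom_qpoch[OF assms(3), of t] qpoch_self_pos[OF assms(1,2), of k]
    qpoch_self_pos[OF assms(1,2), of "n - k"]
  by (simp add: field_simps)

lemma qbinom_symmetric:
  fixes t :: real
  assumes "0 \<le> t" "t < 1" "k \<le> n"
  shows "qbinom t n (n - k) = qbinom t n k"
  using assms by (simp add: qbinom_eq_qpoch_div mult.commute)

lemma qbinom_le:
  assumes "0 \<le> t" "t < 1" shows "qbinom t n k \<le> 1 / qpoch_inf t t"
proof (cases "k \<le> n")
  case True
  have pos: "0 < qpoch t t m" for m
    using qpoch_self_pos[OF assms] .
  have "qpoch t t n \<le> qpoch t t (n - k)"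
    using qpoch_decseq[of t t] assms by (simp add: decseq_def)
  then have "qbinom t n k \<le> qpoch t t (n - k) / (qpoch t t k * qpoch t t (n - k))"
    unfolding qbinom_eq_qpoch_div[OF assms True]
    using pos[of k] pos[of "n - k"] by (intro divide_right_mono) simp_all
  also have "\<dots> = 1 / qpoch t t k"
    using pos[of "n - k"] by simp
  also have "\<dots> \<le> 1 / qpoch_inf t t"
    using pos[of k] assms qpoch_inf_pos[of t t] qpoch_inf_le_qpoch[of t t k]
    by (intro divide_left_mono) simp_all
  finally show ?thesis .
qed (use assms qpoch_inf_pos[of t t] in \<open>simp add: qbinom_eq_0\<close>)

lemma qbinom_central_tendsto:
  assumes "0 \<le> t" "t < 1"
  shows "(\<lambda>n. qbinom t (2 * n) (n + j)) \<longlonglongrightarrow> 1 / qpoch_inf t t"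
proof -
  define Q where "Q = qpoch_inf t t"
  have "0 < Q"
    using assms qpoch_inf_pos[of t t] by (simp add: Q_def)
  have lim: "qpoch t t \<longlonglongrightarrow> Q"
    using assms qpoch_tendsto[of t t] by (simp add: Q_def)
  have "(\<lambda>n. qpoch t t (2 * n)) \<longlonglongrightarrow> Q"
    using LIMSEQ_subseq_LIMSEQ[OF lim, of "\<lambda>n. 2 * n"] by (simp add: strict_mono_def o_def)
  moreover have "(\<lambda>n. qpoch t t (n + j)) \<longlonglongrightarrow> Q"
    using LIMSEQ_ignore_initial_segment[OF lim, of j] .
  moreover have "(\<lambda>n. qpoch t t (n - j)) \<longlonglongrightarrow> Q"
    by (rule LIMSEQ_offset[of _ j]) (simp add: lim)
  ultimately have "(\<lambda>n. qpoch t t (2 * n) / (qpoch t t (n + j) * qpoch t t (n - j))) \<longlonglongrightarrow> Q / (Q * Q)"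
    using \<open>0 < Q\<close> by (intro tendsto_divide tendsto_mult) simp_all
  moreover have "\<forall>\<^sub>F n in sequentially.
      qpoch t t (2 * n) / (qpoch t t (n + j) * qpoch t t (n - j)) = qbinom t (2 * n) (n + j)"
    using eventually_ge_at_top[of j]
  proof eventually_elim
    case (elim n)
    then have "n + j \<le> 2 * n" and "2 * n - (n + j) = n - j"
      by auto
    then show ?case
      using qbinom_eq_qpoch_div[OF assms] by simp
  qed
  ultimately show ?thesis
    using \<open>0 < Q\<close> Lim_transform_eventually by (fastforce simp: Q_def)
qed

section \<open>The Jacobi triple product\<close>

definition theta_term :: "real \<Rightarrow> real \<Rightarrow> nat \<Rightarrow> real" where
  "theta_term z q n = q ^ n\<^sup>2 * (z ^ n + 1 / z ^ n)"

(* theta z q = sum over n in Z of z^n q^(n^2), the terms for n and -n being paired *)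
definition theta :: "real \<Rightarrow> real \<Rightarrow> real" where
  "theta z q = 1 + (\<Sum>n. theta_term z q (Suc n))"

lemma prod_lessThan_add:
  fixes f :: "nat \<Rightarrow> 'a::comm_monoid_mult"
  shows "(\<Prod>k<m + n. f k) = (\<Prod>k<m. f k) * (\<Prod>k<n. f (m + k))"
  by (induction n) (simp_all add: mult_ac)

lemma prod_power_lessThan: "(\<Prod>k<n. t ^ k) = t ^ (n choose 2)"
  by (induction n) (simp_all add: Suc_choose_two power_add mult_ac binomial_eq_0)

lemma sum_atMost_double_centered:
  fixes g :: "nat \<Rightarrow> 'a::comm_monoid_add"
  shows "(\<Sum>i\<le>2 * n. g i) = g n + (\<Sum>j<n. g (n + Suc j) + g (n - Suc j))"
proof (induction n arbitrary: g)
  case (Suc n)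
  have "(\<Sum>i\<le>2 * Suc n. g i) = g 0 + (\<Sum>i\<le>Suc (2 * n). g (Suc i))"
    by (subst sum.atMost_Suc_shift[symmetric]) simp
  also have "\<dots> = g 0 + (\<Sum>i\<le>2 * n. g (Suc i)) + g (Suc (Suc (2 * n)))"
    by (simp add: add.assoc)
  also have "(\<Sum>i\<le>2 * n. g (Suc i)) = g (Suc n) + (\<Sum>j<n. g (Suc n + Suc j) + g (Suc n - Suc j))"
    using Suc.IH[of "\<lambda>i. g (Suc i)"] by (simp add: Suc_diff_Suc)
  finally show ?case
    by (simp add: sum.lessThan_Suc add_ac mult_2)
qed simp

lemma two_choose_two: "2 * (n choose 2) + n = n * n"
  by (induction n) (simp_all add: Suc_choose_two)

lemma theta_exponent_shift:
  assumes "J \<le> Suc M"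
  shows "2 * ((Suc M + J) choose 2) + (2 * M + 1) * (Suc M - J) = 2 * (Suc M choose 2) + (2 * M + 1) * Suc M + J\<^sup>2"
    and "2 * ((Suc M - J) choose 2) + (2 * M + 1) * (Suc M + J) = 2 * (Suc M choose 2) + (2 * M + 1) * Suc M + J\<^sup>2"
proof -
  obtain r where r: "Suc M = J + r"
    using assms le_Suc_ex by blast
  have c: "int (2 * (n choose 2)) = int n * int n - int n" for n
    using arg_cong[OF two_choose_two[of n], of int] by simp
  have M: "int M = int J + int r - 1"
    using r by simp
  show "2 * ((Suc M + J) choose 2) + (2 * M + 1) * (Suc M - J) = 2 * (Suc M choose 2) + (2 * M + 1) * Suc M + J\<^sup>2"
    using c[of "Suc M + J"] c[of "Suc M"] unfolding r
    by (simp only: int_int_eq[symmetric] of_nat_add of_nat_mult M) (simp add: algebra_simps power2_eq_square)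
  show "2 * ((Suc M - J) choose 2) + (2 * M + 1) * (Suc M + J) = 2 * (Suc M choose 2) + (2 * M + 1) * Suc M + J\<^sup>2"
    using c[of r] c[of "Suc M"] unfolding r
    by (simp only: int_int_eq[symmetric] of_nat_add of_nat_mult M) (simp add: algebra_simps power2_eq_square)
qed

lemma prod_shifted_upper_half:
  fixes q z :: real
  shows "(\<Prod>k<Suc M. q ^ (2 * M + 1) + z * (q\<^sup>2) ^ (Suc M + k))
       = (q ^ (2 * M + 1)) ^ Suc M * qpoch (-(z * q)) (q\<^sup>2) (Suc M)"
proof -
  have "q ^ (2 * M + 1) + z * (q\<^sup>2) ^ (Suc M + k) = q ^ (2 * M + 1) * (1 - (-(z * q)) * (q\<^sup>2) ^ k)" for k
  proof -
    have "(q\<^sup>2) ^ (Suc M + k) = q ^ (2 * M + 1) * (q * (q\<^sup>2) ^ k)"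
      by (simp add: power_mult[symmetric] power_add[symmetric])
    then show ?thesis
      by (simp add: algebra_simps)
  qed
  then show ?thesis
    by (simp add: qpoch_def prod.distrib)
qed

lemma prod_shifted_lower_half:
  fixes q z :: real
  assumes "z \<noteq> 0"
  shows "(\<Prod>k<Suc M. q ^ (2 * M + 1) + z * (q\<^sup>2) ^ k)
       = z ^ Suc M * q ^ (2 * (Suc M choose 2)) * qpoch (-(q / z)) (q\<^sup>2) (Suc M)"
proof -
  have "q ^ (2 * M + 1) + z * (q\<^sup>2) ^ (M - k) = (z * (q\<^sup>2) ^ (M - k)) * (1 - (-(q / z)) * (q\<^sup>2) ^ k)"
    if "k < Suc M" for k
  proof -
    have e: "2 * (M - k) + (2 * k + 1) = 2 * M + 1"
      using that by simp
    have "(q\<^sup>2) ^ (M - k) * (q * (q\<^sup>2) ^ k) = q ^ (2 * (M - k) + (2 * k + 1))"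
      by (simp add: power_add power_mult)
    then have shift: "(q\<^sup>2) ^ (M - k) * (q * (q\<^sup>2) ^ k) = q ^ (2 * M + 1)"
      unfolding e .
    have "(z * (q\<^sup>2) ^ (M - k)) * (1 - (-(q / z)) * (q\<^sup>2) ^ k)
        = (q\<^sup>2) ^ (M - k) * (q * (q\<^sup>2) ^ k) + z * (q\<^sup>2) ^ (M - k)"
      using assms by (simp add: field_simps)
    then show ?thesis
      unfolding shift by simp
  qed
  then have "(\<Prod>k<Suc M. q ^ (2 * M + 1) + z * (q\<^sup>2) ^ (M - k))
      = (\<Prod>k<Suc M. z * (q\<^sup>2) ^ (M - k)) * qpoch (-(q / z)) (q\<^sup>2) (Suc M)"
    by (simp add: qpoch_def prod.distrib)
  also have "(\<Prod>k<Suc M. z * (q\<^sup>2) ^ (M - k)) = z ^ Suc M * q ^ (2 * (Suc M choose 2))"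
    using prod.nat_diff_reindex[of "\<lambda>k. (q\<^sup>2) ^ k" "Suc M"]
    by (simp add: prod.distrib prod_power_lessThan power_mult del: prod.lessThan_Suc)
  finally show ?thesis
    using prod.nat_diff_reindex[of "\<lambda>k. q ^ (2 * M + 1) + z * (q\<^sup>2) ^ k" "Suc M"]
    by (simp del: prod.lessThan_Suc)
qed

lemma power_theta_exponent_shift:
  fixes q :: real
  assumes "J \<le> Suc M"
  shows "(q\<^sup>2) ^ ((Suc M + J) choose 2) * (q ^ (2 * M + 1)) ^ (Suc M - J)
           = q ^ (2 * (Suc M choose 2)) * (q ^ (2 * M + 1)) ^ Suc M * q ^ J\<^sup>2"
    and "(q\<^sup>2) ^ ((Suc M - J) choose 2) * (q ^ (2 * M + 1)) ^ (Suc M + J)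
           = q ^ (2 * (Suc M choose 2)) * (q ^ (2 * M + 1)) ^ Suc M * q ^ J\<^sup>2"
  using theta_exponent_shift[OF assms]
  by (simp_all only: power_mult[symmetric] power_add[symmetric])

(* The i-th term of the q-binomial expansion of the product over k < 2N of (q^(2N-1) + z q^(2k)),
   with N = Suc M; the terms i = N + j and i = N - j combine to a multiple of theta_term z q j. *)
definition jtp_term :: "real \<Rightarrow> real \<Rightarrow> nat \<Rightarrow> nat \<Rightarrow> real" where
  "jtp_term z q M i
     = qbinom (q\<^sup>2) (2 * Suc M) i * (q\<^sup>2) ^ (i choose 2) * z ^ i * (q ^ (2 * M + 1)) ^ (2 * Suc M - i)"

lemma jtp_term_middle:
  "jtp_term z q M (Suc M)
     = z ^ Suc M * q ^ (2 * (Suc M choose 2)) * (q ^ (2 * M + 1)) ^ Suc M * qbinom (q\<^sup>2) (2 * Suc M) (Suc M)"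
  by (simp add: jtp_term_def power_mult[symmetric] mult_2 mult_ac del: power_Suc)

lemma jtp_term_pair:
  assumes "\<bar>q\<bar> < 1" "z \<noteq> 0" "J \<le> Suc M"
  shows "jtp_term z q M (Suc M + J) + jtp_term z q M (Suc M - J)
       = z ^ Suc M * q ^ (2 * (Suc M choose 2)) * (q ^ (2 * M + 1)) ^ Suc M
         * (qbinom (q\<^sup>2) (2 * Suc M) (Suc M + J) * theta_term z q J)"
proof -
  define N where "N = Suc M"
  define C where "C = z ^ N * q ^ (2 * (N choose 2)) * (q ^ (2 * M + 1)) ^ N"
  have d1: "2 * N - (N + J) = N - J" and d2: "2 * N - (N - J) = N + J"
    using assms(3) by (auto simp: N_def)
  have sym: "qbinom (q\<^sup>2) (2 * N) (N - J) = qbinom (q\<^sup>2) (2 * N) (N + J)"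
    using qbinom_symmetric[of "q\<^sup>2" "N + J" "2 * N"] d1 assms by (simp add: abs_square_less_1 N_def)
  have "jtp_term z q M (N + J)
      = qbinom (q\<^sup>2) (2 * N) (N + J) * ((q\<^sup>2) ^ ((N + J) choose 2) * (q ^ (2 * M + 1)) ^ (N - J)) * z ^ (N + J)"
    unfolding jtp_term_def N_def[symmetric] d1 by (simp add: mult_ac)
  also have "\<dots> = C * (qbinom (q\<^sup>2) (2 * N) (N + J) * q ^ J\<^sup>2 * z ^ J)"
    unfolding N_def power_theta_exponent_shift(1)[OF assms(3)] by (simp add: C_def N_def power_add mult_ac)
  finally have plus: "jtp_term z q M (N + J) = C * (qbinom (q\<^sup>2) (2 * N) (N + J) * q ^ J\<^sup>2 * z ^ J)" .
  have "jtp_term z q M (N - J)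
      = qbinom (q\<^sup>2) (2 * N) (N + J) * ((q\<^sup>2) ^ ((N - J) choose 2) * (q ^ (2 * M + 1)) ^ (N + J)) * z ^ (N - J)"
    unfolding jtp_term_def N_def[symmetric] d2 sym by (simp add: mult_ac)
  also have "\<dots> = C * (qbinom (q\<^sup>2) (2 * N) (N + J) * q ^ J\<^sup>2 / z ^ J)"
    unfolding N_def power_theta_exponent_shift(2)[OF assms(3)] using assms(2,3)
    by (simp add: C_def N_def power_diff mult_ac)
  finally have minus: "jtp_term z q M (N - J) = C * (qbinom (q\<^sup>2) (2 * N) (N + J) * q ^ J\<^sup>2 / z ^ J)" .
  show ?thesis
    unfolding N_def[symmetric] C_def[symmetric] plus minus by (simp add: theta_term_def algebra_simps)
qed

theorem finite_jacobi_triple_product: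
  fixes q z :: real
  assumes "\<bar>q\<bar> < 1" "q \<noteq> 0" "z \<noteq> 0"
  shows "qpoch (-(z * q)) (q\<^sup>2) N * qpoch (-(q / z)) (q\<^sup>2) N
       = qbinom (q\<^sup>2) (2 * N) N + (\<Sum>j<N. qbinom (q\<^sup>2) (2 * N) (N + Suc j) * theta_term z q (Suc j))"
proof (cases N)
  case (Suc M)
  define C where "C = z ^ N * q ^ (2 * (N choose 2)) * (q ^ (2 * M + 1)) ^ N"
  have "C \<noteq> 0"
    using assms by (simp add: C_def)
  have "(\<Prod>k<2 * N. q ^ (2 * M + 1) + z * (q\<^sup>2) ^ k)
      = (\<Prod>k<Suc M. q ^ (2 * M + 1) + z * (q\<^sup>2) ^ k)
        * (\<Prod>k<Suc M. q ^ (2 * M + 1) + z * (q\<^sup>2) ^ (Suc M + k))"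
    unfolding Suc mult_2 by (rule prod_lessThan_add)
  also have "\<dots> = C * (qpoch (-(z * q)) (q\<^sup>2) N * qpoch (-(q / z)) (q\<^sup>2) N)"
    unfolding prod_shifted_lower_half[OF assms(3)] prod_shifted_upper_half by (simp only: C_def Suc mult_ac)
  finally have "C * (qpoch (-(z * q)) (q\<^sup>2) N * qpoch (-(q / z)) (q\<^sup>2) N)
      = (\<Prod>k<2 * N. q ^ (2 * M + 1) + z * (q\<^sup>2) ^ k)" ..
  also have "\<dots> = (\<Sum>i\<le>2 * N. jtp_term z q M i)"
    by (simp add: q_binomial_theorem jtp_term_def Suc del: prod.lessThan_Suc)
  also have "\<dots> = jtp_term z q M N + (\<Sum>j<N. jtp_term z q M (N + Suc j) + jtp_term z q M (N - Suc j))"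
    by (rule sum_atMost_double_centered)
  also have "jtp_term z q M N = C * qbinom (q\<^sup>2) (2 * N) N"
    unfolding Suc C_def by (rule jtp_term_middle)
  also have "(\<Sum>j<N. jtp_term z q M (N + Suc j) + jtp_term z q M (N - Suc j))
      = (\<Sum>j<N. C * (qbinom (q\<^sup>2) (2 * N) (N + Suc j) * theta_term z q (Suc j)))"
    unfolding Suc C_def by (intro sum.cong refl jtp_term_pair[OF assms(1,3)]) simp
  finally show ?thesis
    using \<open>C \<noteq> 0\<close> by (simp add: sum_distrib_left[symmetric] distrib_left[symmetric])
qed (simp add: qpoch_def)

lemma summable_power_square_mult_power:
  fixes q c :: real
  assumes "\<bar>q\<bar> < 1"
  shows "summable (\<lambda>n. \<bar>q\<bar> ^ n\<^sup>2 * \<bar>c\<bar> ^ n)"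
proof (rule summable_comparison_test_ev)
  have "(\<lambda>n. \<bar>q\<bar> ^ n * \<bar>c\<bar>) \<longlonglongrightarrow> 0 * \<bar>c\<bar>"
    using assms by (intro tendsto_mult tendsto_const LIMSEQ_power_zero) simp
  then have "\<forall>\<^sub>F n in sequentially. \<bar>q\<bar> ^ n * \<bar>c\<bar> < 1 / 2"
    by (intro order_tendstoD(2)) auto
  then show "\<forall>\<^sub>F n in sequentially. norm (\<bar>q\<bar> ^ n\<^sup>2 * \<bar>c\<bar> ^ n) \<le> (1 / 2) ^ n"
  proof eventually_elim
    case (elim n)
    have "norm (\<bar>q\<bar> ^ n\<^sup>2 * \<bar>c\<bar> ^ n) = (\<bar>q\<bar> ^ n * \<bar>c\<bar>) ^ n"
      by (simp add: power2_eq_square power_mult power_mult_distrib)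
    also have "\<dots> \<le> (1 / 2) ^ n"
      using elim by (intro power_mono) auto
    finally show ?case .
  qed
qed (simp add: summable_geometric)

lemma summable_theta_term:
  assumes "\<bar>q\<bar> < 1" "z \<noteq> 0"
  shows "summable (\<lambda>n. norm (theta_term z q n))"
proof (rule summable_comparison_test)
  show "summable (\<lambda>n. \<bar>q\<bar> ^ n\<^sup>2 * \<bar>z\<bar> ^ n + \<bar>q\<bar> ^ n\<^sup>2 * \<bar>1 / z\<bar> ^ n)"
    using assms by (intro summable_add summable_power_square_mult_power)
  show "\<exists>N. \<forall>n\<ge>N. norm (norm (theta_term z q n))
      \<le> \<bar>q\<bar> ^ n\<^sup>2 * \<bar>z\<bar> ^ n + \<bar>q\<bar> ^ n\<^sup>2 * \<bar>1 / z\<bar> ^ n"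
  proof (intro exI allI impI)
    fix n
    have "\<bar>z ^ n + 1 / z ^ n\<bar> \<le> \<bar>z\<bar> ^ n + \<bar>1 / z\<bar> ^ n"
      using abs_triangle_ineq[of "z ^ n" "1 / z ^ n"] by (simp add: power_abs power_one_over)
    then show "norm (norm (theta_term z q n))
        \<le> \<bar>q\<bar> ^ n\<^sup>2 * \<bar>z\<bar> ^ n + \<bar>q\<bar> ^ n\<^sup>2 * \<bar>1 / z\<bar> ^ n"
      by (simp add: theta_term_def abs_mult power_abs distrib_left[symmetric] mult_left_mono)
  qed
qed

lemma qbinom_central_weighted_sum_tendsto:
  assumes "0 \<le> t" "t < 1" "summable (\<lambda>j. norm (b j))"
  shows "(\<lambda>N. \<Sum>j<N. qbinom t (2 * N) (N + Suc j) * b j) \<longlonglongrightarrow> (\<Sum>j. b j) / qpoch_inf t t"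
proof -
  define Q where "Q = qpoch_inf t t"
  have "0 < Q"
    using assms qpoch_inf_pos[of t t] by (simp add: Q_def)
  define a where "a j N = (if j < N then qbinom t (2 * N) (N + Suc j) * b j else 0)" for j N
  have lim: "(\<lambda>N. a j N) \<longlonglongrightarrow> b j / Q" for j
  proof -
    have "(\<lambda>N. qbinom t (2 * N) (N + Suc j) * b j) \<longlonglongrightarrow> 1 / Q * b j"
      using qbinom_central_tendsto[OF assms(1,2), of "Suc j"] by (intro tendsto_mult) (simp_all add: Q_def)
    moreover have "\<forall>\<^sub>F N in sequentially. qbinom t (2 * N) (N + Suc j) * b j = a j N"
      using eventually_gt_at_top[of j] by eventually_elim (simp add: a_def)
    ultimately show ?thesis
      using Lim_transform_eventually by fastforce
  qed
  have bound: "\<forall>\<^sub>F (j, N) in at_top \<times>\<^sub>F sequentially. norm (a j N) \<le> norm (b j) / Q"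
  proof (intro always_eventually allI, clarify)
    fix j N
    have "\<bar>qbinom t (2 * N) (N + Suc j)\<bar> \<le> 1 / Q"
      using qbinom_le[OF assms(1,2)] qbinom_nonneg[OF assms(1)] by (simp add: Q_def)
    then have "\<bar>qbinom t (2 * N) (N + Suc j)\<bar> * norm (b j) \<le> 1 / Q * norm (b j)"
      by (rule mult_right_mono) simp
    then show "norm (a j N) \<le> norm (b j) / Q"
      using \<open>0 < Q\<close> by (auto simp: a_def abs_mult)
  qed
  have "(\<lambda>N. \<Sum>j. a j N) \<longlonglongrightarrow> (\<Sum>j. b j / Q)"
    using tannerys_theorem[OF lim bound summable_divide[OF assms(3)]] by simp
  moreover have "(\<Sum>j. a j N) = (\<Sum>j<N. qbinom t (2 * N) (N + Suc j) * b j)" for N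
    by (subst suminf_finite[of "{..<N}"]) (auto simp: a_def)
  moreover have "(\<Sum>j. b j / Q) = (\<Sum>j. b j) / Q"
    using summable_norm_cancel[OF assms(3)] by (rule suminf_divide)
  ultimately show ?thesis
    by (simp add: Q_def)
qed

theorem jacobi_triple_product:
  assumes "\<bar>q\<bar> < 1" "q \<noteq> 0" "z \<noteq> 0"
  shows "qpoch_inf (q\<^sup>2) (q\<^sup>2) * qpoch_inf (-(z * q)) (q\<^sup>2) * qpoch_inf (-(q / z)) (q\<^sup>2) = theta z q"
proof -
  define t where "t = q\<^sup>2"
  have t: "0 \<le> t" "t < 1" "\<bar>t\<bar> < 1"
    using assms by (auto simp: t_def abs_square_less_1)
  define Q where "Q = qpoch_inf t t"
  have "0 < Q"
    using t qpoch_inf_pos[of t t] by (simp add: Q_def)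
  have summable: "summable (\<lambda>j. norm (theta_term z q (Suc j)))"
    using summable_theta_term[OF assms(1,3)] by (subst summable_Suc_iff)
  have "(\<lambda>N. qpoch t t N * (qbinom t (2 * N) N
          + (\<Sum>j<N. qbinom t (2 * N) (N + Suc j) * theta_term z q (Suc j))))
        \<longlonglongrightarrow> Q * (1 / Q + (\<Sum>j. theta_term z q (Suc j)) / Q)"
    using qbinom_central_tendsto[OF t(1,2), of 0] qpoch_tendsto[OF t(3), of t]
      qbinom_central_weighted_sum_tendsto[OF t(1,2) summable]
    by (intro tendsto_mult tendsto_add) (simp_all add: Q_def)
  moreover have "Q * (1 / Q + (\<Sum>j. theta_term z q (Suc j)) / Q) = theta z q"
    using \<open>0 < Q\<close> by (simp add: theta_def field_simps)
  moreover have "(\<lambda>N. qpoch t t N * (qpoch (-(z * q)) t N * qpoch (-(q / z)) t N))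
        \<longlonglongrightarrow> Q * (qpoch_inf (-(z * q)) t * qpoch_inf (-(q / z)) t)"
    unfolding Q_def by (intro tendsto_mult qpoch_tendsto t)
  ultimately show ?thesis
    using finite_jacobi_triple_product[OF assms] LIMSEQ_unique by (simp add: t_def Q_def mult.assoc)
qed

section \<open>Gauss's identity and the 3-dissection\<close>

lemma qpoch_double: "qpoch a q (2 * n) = qpoch a (q\<^sup>2) n * qpoch (a * q) (q\<^sup>2) n"
  by (induction n) (simp_all add: qpoch_Suc power_mult[symmetric] mult_ac)

lemma qpoch_inf_split_parity:
  assumes "\<bar>q\<bar> < 1"
  shows "qpoch_inf a q = qpoch_inf a (q\<^sup>2) * qpoch_inf (a * q) (q\<^sup>2)"
proof -
  have q2: "\<bar>q\<^sup>2\<bar> < 1"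
    using assms by (simp add: abs_square_less_1)
  have "(\<lambda>n. qpoch a q (2 * n)) \<longlonglongrightarrow> qpoch_inf a q"
    using LIMSEQ_subseq_LIMSEQ[OF qpoch_tendsto[OF assms], of "\<lambda>n. 2 * n"]
    by (simp add: strict_mono_def o_def)
  moreover have "(\<lambda>n. qpoch a q (2 * n)) \<longlonglongrightarrow> qpoch_inf a (q\<^sup>2) * qpoch_inf (a * q) (q\<^sup>2)"
    unfolding qpoch_double by (intro tendsto_mult qpoch_tendsto q2)
  ultimately show ?thesis
    by (rule LIMSEQ_unique)
qed

lemma theta_minus_one_eq_qpoch_inf:
  assumes "\<bar>q\<bar> < 1" "q \<noteq> 0"
  shows "theta (-1) q = qpoch_inf q q ^ 2 / qpoch_inf (q\<^sup>2) (q\<^sup>2)"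
proof -
  have "0 < qpoch_inf (q\<^sup>2) (q\<^sup>2)"
    using assms by (intro qpoch_inf_pos) (simp_all add: abs_square_less_1)
  then show ?thesis
    using jacobi_triple_product[OF assms, of "-1"] qpoch_inf_split_parity[OF assms(1), of q]
    by (simp add: field_simps power2_eq_square)
qed

lemma theta_term_minus_one: "theta_term (-1) q n = 2 * (-1) ^ n * q ^ n\<^sup>2"
  by (cases "even n") (simp_all add: theta_term_def)

lemma power_squares_around_multiple_of_3:
  fixes q :: real
  shows "q ^ (3 * m + 2)\<^sup>2 * q ^ (6 * Suc m) = q * (q ^ 9) ^ (Suc m)\<^sup>2"
    and "q ^ (3 * m + 3)\<^sup>2 = (q ^ 9) ^ (Suc m)\<^sup>2"
    and "q ^ (3 * m + 4)\<^sup>2 = q * (q ^ 9) ^ (Suc m)\<^sup>2 * q ^ (6 * Suc m)"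
proof -
  have e2: "(3 * m + 2)\<^sup>2 + 6 * Suc m = 9 * (Suc m)\<^sup>2 + 1"
    and e3: "(3 * m + 3)\<^sup>2 = 9 * (Suc m)\<^sup>2"
    and e4: "(3 * m + 4)\<^sup>2 = 9 * (Suc m)\<^sup>2 + 1 + 6 * Suc m"
    by (simp_all add: power2_eq_square algebra_simps)
  show "q ^ (3 * m + 2)\<^sup>2 * q ^ (6 * Suc m) = q * (q ^ 9) ^ (Suc m)\<^sup>2"
    unfolding power_add[symmetric] e2 by (simp only: power_add power_one_right power_mult mult_ac)
  show "q ^ (3 * m + 3)\<^sup>2 = (q ^ 9) ^ (Suc m)\<^sup>2"
    unfolding e3 by (simp add: power_mult)
  show "q ^ (3 * m + 4)\<^sup>2 = q * (q ^ 9) ^ (Suc m)\<^sup>2 * q ^ (6 * Suc m)"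
    unfolding e4 by (simp only: power_add power_one_right power_mult mult_ac)
qed

lemma theta_term_minus_one_block:
  assumes "q \<noteq> 0"
  shows "theta_term (-1) q (3 * m + 2) + theta_term (-1) q (3 * m + 3) + theta_term (-1) q (3 * m + 4)
       = theta_term (-1) (q ^ 9) (Suc m) - 2 * q * theta_term (-(q ^ 6)) (q ^ 9) (Suc m)"
proof -
  define s :: real where "s = (-1) ^ Suc m"
  define P where "P = (q ^ 9) ^ (Suc m)\<^sup>2"
  define B where "B = q ^ (6 * Suc m)"
  have "B \<noteq> 0"
    using assms by (simp add: B_def)
  have "s * s = 1"
    by (simp add: s_def power_mult_distrib[symmetric])
  then have "s \<noteq> 0"
    by auto
  have "1 / (s * B) = (s * s) / (s * B)"
    using \<open>s * s = 1\<close> by simp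
  also have "\<dots> = s / B"
    using \<open>s \<noteq> 0\<close> by simp
  finally have inv_sB: "1 / (s * B) = s / B" .
  have signs: "(-1::real) ^ (3 * m + 2) = - s" "(-1::real) ^ (3 * m + 3) = s" "(-1::real) ^ (3 * m + 4) = - s"
    by (simp_all add: s_def power_add power_mult)
  have A2: "q ^ (3 * m + 2)\<^sup>2 = q * P / B"
    using power_squares_around_multiple_of_3(1)[of q m] \<open>B \<noteq> 0\<close> by (simp add: P_def B_def eq_divide_eq)
  have A3: "q ^ (3 * m + 3)\<^sup>2 = P" and A4: "q ^ (3 * m + 4)\<^sup>2 = q * P * B"
    unfolding P_def B_def by (rule power_squares_around_multiple_of_3(2,3))+
  have sB: "(-(q ^ 6)) ^ Suc m = s * B"
    by (simp add: s_def B_def power_mult power_add power_minus[of "q ^ 6"])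
  have "theta_term (-1) (q ^ 9) (Suc m) - 2 * q * theta_term (-(q ^ 6)) (q ^ 9) (Suc m)
      = 2 * s * P - 2 * q * (P * (s * B + 1 / (s * B)))"
    unfolding theta_term_minus_one unfolding theta_term_def sB by (simp only: s_def P_def)
  also have "\<dots> = 2 * (- s) * (q * P / B) + 2 * s * P + 2 * (- s) * (q * P * B)"
    unfolding inv_sB by (simp add: algebra_simps)
  finally show ?thesis
    unfolding theta_term_minus_one signs A2 A3 A4 by simp
qed

lemma summable_theta_term_Suc:
  "\<bar>q\<bar> < 1 \<Longrightarrow> z \<noteq> 0 \<Longrightarrow> summable (\<lambda>n. theta_term z q (Suc n))"
  using summable_norm_cancel[OF summable_theta_term] by (subst summable_Suc_iff)

lemma sums_theta_term_Suc:
  "\<bar>q\<bar> < 1 \<Longrightarrow> z \<noteq> 0 \<Longrightarrow> (\<lambda>n. theta_term z q (Suc n)) sums (theta z q - 1)"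
  using summable_sums[OF summable_theta_term_Suc] by (simp add: theta_def)

lemma sum_atLeastLessThan_3: "(\<Sum>i\<in>{k..<k + 3}. f i) = f k + f (Suc k) + f (Suc (Suc k))"
  by (simp add: numeral_3_eq_3)

theorem theta_minus_one_3_dissection:
  assumes "\<bar>q\<bar> < 1" "q \<noteq> 0"
  shows "theta (-1) q = theta (-1) (q ^ 9) - 2 * q * theta (-(q ^ 6)) (q ^ 9)"
proof -
  define T where "T = theta_term (-1) q"
  have q9: "\<bar>q ^ 9\<bar> < 1"
    using assms by (simp add: power_abs power_less_one_iff)
  have "summable (\<lambda>n. T (Suc n))"
    unfolding T_def using assms by (intro summable_theta_term_Suc) simp_all
  then have tail: "(\<Sum>n. T (n + 2)) = (\<Sum>n. T (Suc n)) - T 1"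
    using suminf_split_head by (simp add: numeral_2_eq_2)
  have "(\<lambda>m. \<Sum>i\<in>{m * 3..<m * 3 + 3}. T (i + 2)) sums (\<Sum>n. T (n + 2))"
    using sums_group[OF summable_sums, of "\<lambda>n. T (n + 2)" 3] \<open>summable (\<lambda>n. T (Suc n))\<close>
    by (simp add: summable_Suc_iff[symmetric, of "\<lambda>n. T (Suc n)"] numeral_2_eq_2)
  moreover have "(\<Sum>i\<in>{m * 3..<m * 3 + 3}. T (i + 2))
      = theta_term (-1) (q ^ 9) (Suc m) - 2 * q * theta_term (-(q ^ 6)) (q ^ 9) (Suc m)" for m
  proof -
    have "m * 3 + 2 = 3 * m + 2" "Suc (m * 3) + 2 = 3 * m + 3" "Suc (Suc (m * 3)) + 2 = 3 * m + 4"
      by simp_all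
    then show ?thesis
      unfolding sum_atLeastLessThan_3 T_def by (simp only: theta_term_minus_one_block[OF assms(2)])
  qed
  moreover have "(\<lambda>m. theta_term (-1) (q ^ 9) (Suc m) - 2 * q * theta_term (-(q ^ 6)) (q ^ 9) (Suc m))
      sums ((theta (-1) (q ^ 9) - 1) - 2 * q * (theta (-(q ^ 6)) (q ^ 9) - 1))"
    using assms q9 by (intro sums_diff sums_mult sums_theta_term_Suc) simp_all
  ultimately have "(\<Sum>n. T (n + 2)) = (theta (-1) (q ^ 9) - 1) - 2 * q * (theta (-(q ^ 6)) (q ^ 9) - 1)"
    by (simp add: sums_unique2)
  moreover have "T 1 = - 2 * q"
    by (simp add: T_def theta_term_minus_one)
  ultimately show ?thesis
    using tail by (simp add: theta_def T_def algebra_simps)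
qed

section \<open>The two product expansions\<close>

lemma inv_partial_prod_mult_qpoch_square:
  assumes "\<forall>k. e k \<le> 2" "\<bar>x\<bar> < 1"
  shows "inv_partial_prod e K x * qpoch x x K ^ 2 = (\<Prod>k\<in>{1..K}. (1 - x ^ k) ^ (2 - e k))"
proof -
  have factor: "(1 / (1 - x ^ k)) ^ e k * (1 - x ^ k) ^ 2 = (1 - x ^ k) ^ (2 - e k)" if "k \<in> {1..K}" for k
  proof -
    have "\<bar>x ^ k\<bar> < 1"
      using that assms(2) by (simp add: power_abs power_less_one_iff)
    then have "1 - x ^ k \<noteq> 0"
      by auto
    moreover have "(1 - x ^ k) ^ 2 = (1 - x ^ k) ^ e k * (1 - x ^ k) ^ (2 - e k)"
      using assms(1) by (simp add: power_add[symmetric])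
    ultimately show ?thesis
      by (simp add: power_one_over)
  qed
  show ?thesis
    unfolding inv_partial_prod_def qpoch_self prod_power_distrib prod.distrib[symmetric]
    by (rule prod.cong[OF refl factor])
qed

lemma prod_atLeastAtMost_6_blocks:
  fixes f :: "nat \<Rightarrow> 'a::comm_monoid_mult"
  shows "(\<Prod>k\<in>{1..6 * N}. f k)
       = (\<Prod>m<N. f (6 * m + 1) * f (6 * m + 2) * f (6 * m + 3) * f (6 * m + 4) * f (6 * m + 5) * f (6 * m + 6))"
proof (induction N)
  case (Suc N)
  have "6 * Suc N = Suc (Suc (Suc (Suc (Suc (Suc (6 * N))))))"
    by simp
  moreover have "6 * N + 2 = Suc (Suc (6 * N))" "6 * N + 3 = Suc (Suc (Suc (6 * N)))"
    "6 * N + 4 = Suc (Suc (Suc (Suc (6 * N))))" "6 * N + 5 = Suc (Suc (Suc (Suc (Suc (6 * N)))))"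
    "6 * N + 6 = Suc (Suc (Suc (Suc (Suc (Suc (6 * N))))))"
    by simp_all
  ultimately show ?case
    using Suc by (simp only: prod.cl_ivl_Suc prod.lessThan_Suc) (simp add: mult_ac)
qed simp

(* The product of (1 - x^k)^(-exponent_res0 k) is (x^6;x^6) (x^3;x^6)^2 / (x;x)^2, and that of
   (1 - x^k)^(-exponent_res1 k) is (x^6;x^6) (x;x^6) (x^5;x^6) / (x;x)^2. *)
definition exponent_res0 :: "nat \<Rightarrow> nat" where
  "exponent_res0 k = (if k mod 6 = 3 then 0 else if k mod 6 = 0 then 1 else 2)"

definition exponent_res1 :: "nat \<Rightarrow> nat" where
  "exponent_res1 k = (if k mod 6 = 0 \<or> k mod 6 = 1 \<or> k mod 6 = 5 then 1 else 2)"

lemma qpoch_power_eq_prod: "qpoch (x ^ j) (x ^ 6) N = (\<Prod>m<N. 1 - x ^ (6 * m + j))"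
  unfolding qpoch_def by (intro prod.cong refl) (simp only: power_mult[symmetric] power_add[symmetric] add.commute)

lemma exponent_res0_blocks:
  "exponent_res0 (6 * m + 1) = 2" "exponent_res0 (6 * m + 2) = 2" "exponent_res0 (6 * m + 3) = 0"
  "exponent_res0 (6 * m + 4) = 2" "exponent_res0 (6 * m + 5) = 2" "exponent_res0 (6 * m + 6) = 1"
  unfolding exponent_res0_def by presburger+

lemma exponent_res1_blocks:
  "exponent_res1 (6 * m + 1) = 1" "exponent_res1 (6 * m + 2) = 2" "exponent_res1 (6 * m + 3) = 2"
  "exponent_res1 (6 * m + 4) = 2" "exponent_res1 (6 * m + 5) = 1" "exponent_res1 (6 * m + 6) = 1"
  unfolding exponent_res1_def by presburger+

lemma inv_partial_prod_exponent_res0: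
  assumes "\<bar>x\<bar> < 1"
  shows "inv_partial_prod exponent_res0 (6 * N) x * qpoch x x (6 * N) ^ 2
       = qpoch (x ^ 6) (x ^ 6) N * qpoch (x ^ 3) (x ^ 6) N ^ 2"
proof -
  have "\<forall>k. exponent_res0 k \<le> 2"
    by (simp add: exponent_res0_def)
  then show ?thesis
    unfolding inv_partial_prod_mult_qpoch_square[OF \<open>\<forall>k. exponent_res0 k \<le> 2\<close> assms]
      prod_atLeastAtMost_6_blocks qpoch_power_eq_prod exponent_res0_blocks
    by (simp add: prod.distrib power2_eq_square mult_ac)
qed

lemma inv_partial_prod_exponent_res1:
  assumes "\<bar>x\<bar> < 1"
  shows "inv_partial_prod exponent_res1 (6 * N) x * qpoch x x (6 * N) ^ 2
       = qpoch (x ^ 6) (x ^ 6) N * qpoch (x ^ 5) (x ^ 6) N * qpoch (x ^ 1) (x ^ 6) N"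
proof -
  have "\<forall>k. exponent_res1 k \<le> 2"
    by (simp add: exponent_res1_def)
  then show ?thesis
    unfolding inv_partial_prod_mult_qpoch_square[OF \<open>\<forall>k. exponent_res1 k \<le> 2\<close> assms]
      prod_atLeastAtMost_6_blocks qpoch_power_eq_prod exponent_res1_blocks
    by (simp add: prod.distrib mult_ac)
qed

lemma sums_inv_prod_coeff_of_tendsto:
  assumes "\<forall>k. e k \<le> B" "\<bar>x\<bar> < 1" "0 < d"
    and lim: "(\<lambda>N. inv_partial_prod e (d * N) x * qpoch x x (d * N) ^ p) \<longlonglongrightarrow> L"
  shows "(\<lambda>n. inv_prod_coeff e n * x ^ n) sums (L / qpoch_inf x x ^ p)"
proof -
  define S where "S = (\<Sum>n. inv_prod_coeff e n * x ^ n)"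
  have "strict_mono (\<lambda>N. d * N)"
    using assms(3) by (simp add: strict_mono_def)
  have "(\<lambda>N. inv_partial_prod e (d * N) x) \<longlonglongrightarrow> S"
    using LIMSEQ_subseq_LIMSEQ[OF inv_partial_prod_tendsto[OF assms(1,2)] \<open>strict_mono (\<lambda>N. d * N)\<close>]
    by (simp add: S_def o_def)
  moreover have "(\<lambda>N. qpoch x x (d * N)) \<longlonglongrightarrow> qpoch_inf x x"
    using LIMSEQ_subseq_LIMSEQ[OF qpoch_tendsto[OF assms(2)] \<open>strict_mono (\<lambda>N. d * N)\<close>]
    by (simp add: o_def)
  ultimately have "S * qpoch_inf x x ^ p = L"
    using LIMSEQ_unique[OF tendsto_mult[OF _ tendsto_power] lim] by blast
  moreover have "0 < qpoch_inf x x"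
    using assms(2) by (intro qpoch_inf_pos)
  ultimately have "L / qpoch_inf x x ^ p = S"
    by (auto simp: divide_eq_eq)
  then show ?thesis
    using summable_sums[OF summable_norm_cancel[OF summable_inv_prod_coeff[OF assms(1,2)]]]
    by (simp add: S_def)
qed

lemma sums_inv_prod_coeff_exponent_res0:
  assumes "\<bar>x\<bar> < 1" "x \<noteq> 0"
  shows "(\<lambda>n. inv_prod_coeff exponent_res0 n * x ^ n) sums (theta (-1) (x ^ 3) / qpoch_inf x x ^ 2)"
proof (rule sums_inv_prod_coeff_of_tendsto)
  have x3: "\<bar>x ^ 3\<bar> < 1" "x ^ 3 \<noteq> 0" and x6: "\<bar>x ^ 6\<bar> < 1"
    using assms abs_power_less_one[OF assms(1), of 3] abs_power_less_one[OF assms(1), of 6] by simp_all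
  show "\<forall>k. exponent_res0 k \<le> 2"
    by (simp add: exponent_res0_def)
  have "(\<lambda>N. qpoch (x ^ 6) (x ^ 6) N * qpoch (x ^ 3) (x ^ 6) N ^ 2)
      \<longlonglongrightarrow> qpoch_inf (x ^ 6) (x ^ 6) * qpoch_inf (x ^ 3) (x ^ 6) ^ 2"
    by (intro tendsto_mult tendsto_power qpoch_tendsto x6)
  also have "qpoch_inf (x ^ 6) (x ^ 6) * qpoch_inf (x ^ 3) (x ^ 6) ^ 2 = theta (-1) (x ^ 3)"
    using jacobi_triple_product[OF x3, of "-1"] by (simp add: power_mult[symmetric] power2_eq_square mult.assoc)
  finally show "(\<lambda>N. inv_partial_prod exponent_res0 (6 * N) x * qpoch x x (6 * N) ^ 2)
      \<longlonglongrightarrow> theta (-1) (x ^ 3)"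
    unfolding inv_partial_prod_exponent_res0[OF assms(1)] .
qed (use assms in simp_all)

lemma sums_inv_prod_coeff_exponent_res1:
  assumes "\<bar>x\<bar> < 1" "x \<noteq> 0"
  shows "(\<lambda>n. inv_prod_coeff exponent_res1 n * x ^ n) sums (theta (-(x\<^sup>2)) (x ^ 3) / qpoch_inf x x ^ 2)"
proof (rule sums_inv_prod_coeff_of_tendsto)
  have x3: "\<bar>x ^ 3\<bar> < 1" "x ^ 3 \<noteq> 0" and x6: "\<bar>x ^ 6\<bar> < 1"
    using assms abs_power_less_one[OF assms(1), of 3] abs_power_less_one[OF assms(1), of 6] by simp_all
  show "\<forall>k. exponent_res1 k \<le> 2"
    by (simp add: exponent_res1_def)
  have "(\<lambda>N. qpoch (x ^ 6) (x ^ 6) N * qpoch (x ^ 5) (x ^ 6) N * qpoch (x ^ 1) (x ^ 6) N)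
      \<longlonglongrightarrow> qpoch_inf (x ^ 6) (x ^ 6) * qpoch_inf (x ^ 5) (x ^ 6) * qpoch_inf (x ^ 1) (x ^ 6)"
    by (intro tendsto_mult qpoch_tendsto x6)
  also have "qpoch_inf (x ^ 6) (x ^ 6) * qpoch_inf (x ^ 5) (x ^ 6) * qpoch_inf (x ^ 1) (x ^ 6)
      = theta (-(x\<^sup>2)) (x ^ 3)"
  proof -
    have "-(-(x\<^sup>2) * x ^ 3) = x ^ 5" "-(x ^ 3 / -(x\<^sup>2)) = x ^ 1" "(x ^ 3)\<^sup>2 = x ^ 6"
      using assms(2) by (simp_all add: eval_nat_numeral field_simps)
    then show ?thesis
      using jacobi_triple_product[OF x3, of "-(x\<^sup>2)"] assms(2) by simp
  qed
  finally show "(\<lambda>N. inv_partial_prod exponent_res1 (6 * N) x * qpoch x x (6 * N) ^ 2)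
      \<longlonglongrightarrow> theta (-(x\<^sup>2)) (x ^ 3)"
    unfolding inv_partial_prod_exponent_res1[OF assms(1)] .
qed (use assms in simp_all)

lemma F_eq_theta_3_dissection:
  assumes "\<bar>q\<bar> < 1" "q \<noteq> 0"
  shows "F q = theta (-1) ((q ^ 3) ^ 3) / qpoch_inf (q ^ 3) (q ^ 3) ^ 2
             - 2 * q * (theta (-((q ^ 3)\<^sup>2)) ((q ^ 3) ^ 3) / qpoch_inf (q ^ 3) (q ^ 3) ^ 2)"
proof -
  have "0 < qpoch_inf (q\<^sup>2) (q\<^sup>2)"
    using assms(1) by (intro qpoch_inf_pos) (simp_all add: abs_square_less_1)
  then have "F q = theta (-1) q / qpoch_inf (q ^ 3) (q ^ 3) ^ 2"
    unfolding F_def theta_minus_one_eq_qpoch_inf[OF assms] by (simp add: field_simps)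
  then show ?thesis
    unfolding theta_minus_one_3_dissection[OF assms]
    by (simp add: power_mult[symmetric] diff_divide_distrib)
qed

lemma sums_spread_residue:
  fixes c :: "nat \<Rightarrow> real"
  assumes "(\<lambda>m. c m * (q ^ d) ^ m) sums S" "r < d"
  shows "(\<lambda>n. if n mod d = r then c (n div d) * q ^ n else 0) sums (q ^ r * S)"
proof -
  define f where "f = (\<lambda>n. if n mod d = r then c (n div d) * q ^ n else 0)"
  have "strict_mono (\<lambda>m. d * m + r)"
    using assms(2) by (auto simp: strict_mono_def)
  moreover have "f n = 0" if "n \<notin> range (\<lambda>m. d * m + r)" for n
  proof -
    have "n \<noteq> d * (n div d) + r"
      using that by blast
    then have "n mod d \<noteq> r"
      using mult_div_mod_eq[of d n] by auto
    then show ?thesis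
      by (simp add: f_def)
  qed
  moreover have "(\<lambda>m. f (d * m + r)) = (\<lambda>m. q ^ r * (c m * (q ^ d) ^ m))"
    using assms(2) by (simp add: fun_eq_iff f_def power_add mult_ac flip: power_mult)
  ultimately have "(\<lambda>m. q ^ r * (c m * (q ^ d) ^ m)) sums (q ^ r * S) \<longleftrightarrow> f sums (q ^ r * S)"
    using sums_mono_reindex[of "\<lambda>m. d * m + r" f] by simp
  then show ?thesis
    using sums_mult[OF assms(1)] by (simp add: f_def)
qed

definition F_coeff :: "nat \<Rightarrow> real" where
  "F_coeff n = (if n mod 3 = 0 then inv_prod_coeff exponent_res0 (n div 3)
                else if n mod 3 = 1 then - 2 * inv_prod_coeff exponent_res1 (n div 3) else 0)"

lemma F_coeff_sign:
  "(n mod 3 = 0 \<longrightarrow> F_coeff n > 0) \<and> (n mod 3 = 1 \<longrightarrow> F_coeff n < 0) \<and>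
   (n mod 3 = 2 \<longrightarrow> F_coeff n = 0)"
proof -
  have "1 \<le> (inv_prod_coeff exponent_res0 (n div 3) :: real)" "1 \<le> (inv_prod_coeff exponent_res1 (n div 3) :: real)"
    by (simp_all add: inv_prod_coeff_ge_1 exponent_res0_def exponent_res1_def)
  then show ?thesis
    by (auto simp: F_coeff_def)
qed

lemma sums_F_coeff:
  assumes "\<bar>q\<bar> < 1" shows "(\<lambda>n. F_coeff n * q ^ n) sums F q"
proof (cases "q = 0")
  case True
  then show ?thesis
    using powser_sums_zero[of F_coeff] by (simp add: F_def qpoch_inf_0_0 F_coeff_def inv_prod_coeff_0)
next
  case False
  define x where "x = q ^ 3"
  have x: "\<bar>x\<bar> < 1" "x \<noteq> 0"
    using False abs_power_less_one[OF assms, of 3] by (simp_all add: x_def)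
  define G0 where "G0 = theta (-1) (x ^ 3) / qpoch_inf x x ^ 2"
  define G1 where "G1 = theta (-(x\<^sup>2)) (x ^ 3) / qpoch_inf x x ^ 2"
  have "(\<lambda>n. if n mod 3 = 0 then inv_prod_coeff exponent_res0 (n div 3) * q ^ n else 0) sums (q ^ 0 * G0)"
    using sums_inv_prod_coeff_exponent_res0[OF x] unfolding G0_def x_def by (rule sums_spread_residue) simp
  moreover have "(\<lambda>n. if n mod 3 = 1 then inv_prod_coeff exponent_res1 (n div 3) * q ^ n else 0) sums (q ^ 1 * G1)"
    using sums_inv_prod_coeff_exponent_res1[OF x] unfolding G1_def x_def by (rule sums_spread_residue) simp
  ultimately have "(\<lambda>n. (if n mod 3 = 0 then inv_prod_coeff exponent_res0 (n div 3) * q ^ n else 0)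
      + - 2 * (if n mod 3 = 1 then inv_prod_coeff exponent_res1 (n div 3) * q ^ n else 0))
      sums (q ^ 0 * G0 + - 2 * (q ^ 1 * G1))"
    by (intro sums_add sums_mult)
  moreover have "(\<lambda>n. (if n mod 3 = 0 then inv_prod_coeff exponent_res0 (n div 3) * q ^ n else 0)
      + - 2 * (if n mod 3 = 1 then inv_prod_coeff exponent_res1 (n div 3) * q ^ n else 0))
      = (\<lambda>n. F_coeff n * q ^ n)"
    by (auto simp: F_coeff_def fun_eq_iff)
  moreover have "q ^ 0 * G0 + - 2 * (q ^ 1 * G1) = F q"
    unfolding F_eq_theta_3_dissection[OF assms False] G0_def G1_def x_def by simp
  ultimately show ?thesis
    by (simp only:)
qed

theorem theorem1p3:
  shows "\<exists>a :: nat \<Rightarrow> real.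
           (\<forall>q::real. \<bar>q\<bar> < 1 \<longrightarrow> (\<lambda>n. a n * q ^ n) sums F q) \<and>
           (\<forall>n. (n mod 3 = 0 \<longrightarrow> a n > 0) \<and>
                (n mod 3 = 1 \<longrightarrow> a n < 0) \<and>
                (n mod 3 = 2 \<longrightarrow> a n = 0))"
  using sums_F_coeff F_coeff_sign by blast

end
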